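(* Let $G(x,u)=\sum_{n\ge0}\frac{u^n}{n!}G_n(x)$ and $H(x,u)=\sum_{n\ge0}\frac{u^n}{n!}H_n(x)$. Then \[H(x,u)=(1+x)\left(G(x,u)-\tfrac12G(x,u)^2\right).\]
   Context: $G_0(x)=\frac{x}{1+x}$, $H_0(x)=\frac{x(x+2)}{2(x+1)}$, and for $n\ge1$ the polynomials $G_n,H_n$ are defined by $G_1=H_1=1$, $G_{n+1}(x)=(2n+nx)G_n(x)+(1+x)^2G_n'(x)$, $H_{n+1}(x)=(2n-1+(n-1)x)H_n(x)+(1+x)^2H_n'(x)$. The identity is of formal power series in $u$ and $x$. *)

theory Defs
  imports "HOL-Computational_Algebra.Computational_Algebra"
begin

text \<open>The polynomials G_n, H_n for n \<ge> 1 (index 0 is unused: G_0, H_0 are rational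
  functions, handled separately below).\<close>

fun Gpoly :: "nat \<Rightarrow> real poly" where
  "Gpoly 0 = 0"
| "Gpoly (Suc 0) = 1"
| "Gpoly (Suc (Suc m)) =
     [: 2 * real (Suc m), real (Suc m) :] * Gpoly (Suc m)
     + [:1, 1:]^2 * pderiv (Gpoly (Suc m))"

fun Hpoly :: "nat \<Rightarrow> real poly" where
  "Hpoly 0 = 0"
| "Hpoly (Suc 0) = 1"
| "Hpoly (Suc (Suc m)) =
     [: 2 * real (Suc m) - 1, real (Suc m) - 1 :] * Hpoly (Suc m)
     + [:1, 1:]^2 * pderiv (Hpoly (Suc m))"

definition Gn :: "nat \<Rightarrow> real fps" where
  "Gn n = (if n = 0 then fps_X / (1 + fps_X) else fps_of_poly (Gpoly n))"

definition Hn :: "nat \<Rightarrow> real fps" where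
  "Hn n = (if n = 0 then fps_X * (fps_X + 2) / (2 * (fps_X + 1)) else fps_of_poly (Hpoly n))"

text \<open>Bivariate exponential generating functions: formal power series in u whose
  coefficients are formal power series in x.\<close>

definition Gser :: "real fps fps" where
  "Gser = Abs_fps (\<lambda>n. fps_const (1 / fact n) * Gn n)"

definition Hser :: "real fps fps" where
  "Hser = Abs_fps (\<lambda>n. fps_const (1 / fact n) * Hn n)"

end

theory Submission
  imports Defs
begin

text \<open>
  Write \<open>u\<close> for the variable of the outer series and \<open>x\<close> for that of the
  coefficients. The recurrences for \<open>G\<^sub>n\<close> and \<open>H\<^sub>n\<close>, including the step from
  the rational functions \<open>G\<^sub>0\<close>, \<open>H\<^sub>0\<close>, say exactly that \<open>G\<close> and \<open>H\<close> solve the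
  first-order equations \<open>\<partial>\<^sub>u G = P G\<close> and \<open>\<partial>\<^sub>u H = P H - (1 + x) H\<close>, where
  \<open>P = (2 + x) u \<partial>\<^sub>u + (1 + x)\<^sup>2 \<partial>\<^sub>x\<close> is a derivation. Since \<open>P\<close> obeys the
  Leibniz rule, \<open>M = G - G\<^sup>2/2\<close> again solves \<open>\<partial>\<^sub>u M = P M\<close>, and then
  \<open>K = (1 + x) M\<close> solves the equation of \<open>H\<close> because \<open>P (1 + x) = (1 + x) P + (1 + x)\<^sup>2\<close>.
  Comparing coefficients of \<open>u\<^sup>n\<close> shows that such an equation determines a series
  from its constant term, and \<open>H\<^sub>0 = (1 + x) (G\<^sub>0 - G\<^sub>0\<^sup>2/2)\<close> is checked directly.
\<close>

definition fps_deriv_coeffs :: "'a::comm_ring_1 fps fps \<Rightarrow> 'a fps fps" where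
  "fps_deriv_coeffs A = Abs_fps (\<lambda>n. fps_deriv (A $ n))"

lemma fps_deriv_coeffs_nth [simp]: "fps_deriv_coeffs A $ n = fps_deriv (A $ n)"
  by (simp add: fps_deriv_coeffs_def)

lemma fps_deriv_coeffs_diff [simp]:
  "fps_deriv_coeffs (A - B) = fps_deriv_coeffs A - fps_deriv_coeffs B"
  by (rule fps_ext) simp

lemma fps_deriv_coeffs_mult:
  "fps_deriv_coeffs (A * B) = fps_deriv_coeffs A * B + A * fps_deriv_coeffs B"
  by (rule fps_ext) (simp add: fps_mult_nth fps_deriv_sum sum.distrib add.commute)

lemma fps_deriv_coeffs_const_mult:
  "fps_deriv_coeffs (fps_const c * A)
     = fps_const (fps_deriv c) * A + fps_const c * fps_deriv_coeffs A"
  by (rule fps_ext) (simp add: algebra_simps)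

definition fps_derivation :: "'a::comm_ring_1 fps \<Rightarrow> 'a fps \<Rightarrow> 'a fps fps \<Rightarrow> 'a fps fps" where
  "fps_derivation a b A = fps_const a * fps_X * fps_deriv A + fps_const b * fps_deriv_coeffs A"

lemma fps_derivation_nth:
  "fps_derivation a b A $ n = a * of_nat n * A $ n + b * fps_deriv (A $ n)"
proof -
  have "(fps_const a * fps_X * fps_deriv A) $ n = a * of_nat n * A $ n"
    by (cases n) (simp_all add: mult.assoc)
  then show ?thesis by (simp add: fps_derivation_def)
qed

lemma fps_derivation_diff:
  "fps_derivation a b (A - B) = fps_derivation a b A - fps_derivation a b B"
  by (simp add: fps_derivation_def algebra_simps)

lemma fps_derivation_mult:
  "fps_derivation a b (A * B) = fps_derivation a b A * B + A * fps_derivation a b B"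
  by (simp add: fps_derivation_def fps_deriv_coeffs_mult algebra_simps)

lemma fps_derivation_const_mult:
  "fps_derivation a b (fps_const c * A)
     = fps_const c * fps_derivation a b A + fps_const (b * fps_deriv c) * A"
  unfolding fps_derivation_def fps_deriv_coeffs_const_mult by (simp add: algebra_simps)

lemma fps_derivation_power2:
  "fps_derivation a b (A ^ 2) = 2 * A * fps_derivation a b A"
  by (simp add: power2_eq_square fps_derivation_mult algebra_simps)

lemma linear_pde_solution_eq_0:
  fixes D :: "'a::field_char_0 fps fps"
  assumes "fps_deriv D = fps_derivation a b D - fps_const c * D" and "D $ 0 = 0"
  shows "D = 0"
proof -
  have "D $ n = 0" for n
  proof (induction n)
    case 0
    then show ?case using assms(2) by simp
  next
    case (Suc n)
    have "of_nat (Suc n) * D $ Suc n = fps_deriv D $ n"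
      by (simp add: mult.commute)
    also have "\<dots> = (fps_derivation a b D - fps_const c * D) $ n"
      using assms(1) by simp
    also have "\<dots> = 0" using Suc by (simp add: fps_derivation_nth)
    finally show ?case by (simp del: of_nat_Suc)
  qed
  then show ?thesis by (simp add: fps_ext)
qed

lemma fps_derivation_solution_quadratic:
  assumes "fps_deriv F = fps_derivation a b F"
  shows "fps_deriv (F - fps_const (fps_const c) * F ^ 2)
       = fps_derivation a b (F - fps_const (fps_const c) * F ^ 2)"
proof -
  have "fps_derivation a b (fps_const (fps_const c) * F ^ 2)
      = fps_const (fps_const c) * (2 * F * fps_derivation a b F)"
    by (simp add: fps_derivation_const_mult fps_derivation_power2)
  then show ?thesis
    using assms by (simp add: fps_derivation_diff power2_eq_square algebra_simps)
qed

lemma fps_derivation_solution_const_mult: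
  assumes "fps_deriv M = fps_derivation a b M"
  shows "fps_deriv (fps_const e * M)
       = fps_derivation a b (fps_const e * M) - fps_const (b * fps_deriv e) * M"
  using assms by (simp add: fps_derivation_const_mult)

definition egf_coeffs :: "(nat \<Rightarrow> 'a::field_char_0 fps) \<Rightarrow> 'a fps fps" where
  "egf_coeffs F = Abs_fps (\<lambda>n. fps_const (1 / fact n) * F n)"

lemma egf_coeffs_nth: "egf_coeffs F $ n = fps_const (1 / fact n) * F n"
  by (simp add: egf_coeffs_def)

lemma egf_coeffs_pde:
  assumes "\<And>n. F (Suc n) = a * of_nat n * F n + b * fps_deriv (F n) - c * F n"
  shows "fps_deriv (egf_coeffs F)
     = fps_derivation a b (egf_coeffs F) - fps_const c * egf_coeffs F"
proof (rule fps_ext)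
  fix n
  have fact_step:
    "(of_nat (Suc n) :: 'a fps) * fps_const (1 / fact (Suc n)) = fps_const (1 / fact n)"
    by (simp add: fps_of_nat[symmetric] field_simps del: of_nat_Suc)
  have "fps_deriv (egf_coeffs F) $ n
      = of_nat (Suc n) * fps_const (1 / fact (Suc n)) * F (Suc n)"
    by (simp add: egf_coeffs_nth mult.assoc del: of_nat_Suc)
  also have "\<dots> = fps_const (1 / fact n) * F (Suc n)"
    by (simp only: fact_step)
  also have "\<dots> = (fps_derivation a b (egf_coeffs F) - fps_const c * egf_coeffs F) $ n"
    by (simp add: assms fps_derivation_nth egf_coeffs_nth algebra_simps)
  finally show "fps_deriv (egf_coeffs F) $ n
      = (fps_derivation a b (egf_coeffs F) - fps_const c * egf_coeffs F) $ n" .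
qed

lemma Gn_0_mult: "Gn 0 * (1 + fps_X) = fps_X"
  by (simp add: Gn_def fps_is_unit_iff unit_imp_dvd)

lemma Hn_0_mult: "Hn 0 * (2 * (fps_X + 1)) = fps_X * (fps_X + 2)"
proof -
  have "(2 * (fps_X + 1) :: real fps) dvd fps_X * (fps_X + 2)"
    by (simp add: fps_is_unit_iff unit_imp_dvd)
  then show ?thesis by (simp add: Hn_def)
qed

lemma Gn_Suc: "Gn (Suc n) = (2 + fps_X) * of_nat n * Gn n + (1 + fps_X)^2 * fps_deriv (Gn n)"
proof (cases n)
  case 0
  have "fps_deriv (Gn 0) * (1 + fps_X) + Gn 0 = 1"
    using arg_cong[OF Gn_0_mult, of fps_deriv] by (simp add: algebra_simps)
  then have deriv_Gn_0: "fps_deriv (Gn 0) * (1 + fps_X) = 1 - Gn 0"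
    by (simp add: algebra_simps)
  have "(1 + fps_X)^2 * fps_deriv (Gn 0) = (1 + fps_X) * (fps_deriv (Gn 0) * (1 + fps_X))"
    by (simp add: power2_eq_square algebra_simps)
  also have "\<dots> = (1 + fps_X) * (1 - Gn 0)"
    by (simp only: deriv_Gn_0)
  also have "\<dots> = 1"
    using Gn_0_mult by (simp add: algebra_simps)
  finally show ?thesis
    using 0 by (simp add: Gn_def)
next
  case (Suc m)
  then show ?thesis
    by (simp add: Gn_def fps_of_poly_simps fps_of_nat[symmetric] numeral_fps_const algebra_simps)
qed

lemma Hn_Suc:
  "Hn (Suc n) = (2 + fps_X) * of_nat n * Hn n + (1 + fps_X)^2 * fps_deriv (Hn n)
     - (1 + fps_X) * Hn n"
proof (cases n)
  case 0
  have "fps_deriv (Hn 0) * (2 * (fps_X + 1)) + 2 * Hn 0 = 2 * fps_X + 2"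
    using arg_cong[OF Hn_0_mult, of fps_deriv] by (simp add: algebra_simps)
  then have deriv_Hn_0: "fps_deriv (Hn 0) * (2 * (fps_X + 1)) = 2 * fps_X + 2 - 2 * Hn 0"
    by (simp add: algebra_simps)
  have "2 * ((1 + fps_X)^2 * fps_deriv (Hn 0) - (1 + fps_X) * Hn 0)
      = (1 + fps_X) * (fps_deriv (Hn 0) * (2 * (fps_X + 1))) - 2 * ((1 + fps_X) * Hn 0)"
    by (simp add: power2_eq_square algebra_simps)
  also have "\<dots> = (1 + fps_X) * (2 * fps_X + 2 - 2 * Hn 0) - 2 * ((1 + fps_X) * Hn 0)"
    by (simp only: deriv_Hn_0)
  also have "\<dots> = 2 * (1 + fps_X)^2 - 2 * (Hn 0 * (2 * (fps_X + 1)))"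
    by (simp add: power2_eq_square algebra_simps)
  also have "\<dots> = 2 * 1"
    using Hn_0_mult by (simp add: power2_eq_square algebra_simps)
  finally have "(1 + fps_X)^2 * fps_deriv (Hn 0) - (1 + fps_X) * Hn 0 = 1"
    by (metis mult_left_cancel zero_neq_numeral)
  then show ?thesis
    using 0 by (simp add: Hn_def)
next
  case (Suc m)
  have linear: "fps_of_poly [:a, b:] = fps_const a + fps_const b * fps_X" for a b :: real
    by (simp add: fps_of_poly_pCons algebra_simps)
  have expand: "Hn (Suc n) = (fps_const (2 * real n - 1) + fps_const (real n - 1) * fps_X) * Hn n
      + (1 + fps_X)^2 * fps_deriv (Hn n)"
    using Suc by (simp only: Hn_def Hpoly.simps fps_of_poly_mult fps_of_poly_add linear
       fps_of_poly_power fps_of_poly_pderiv fps_of_poly_pCons fps_of_poly_1 fps_of_poly_0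
       fps_const_1_eq_1 Suc_neq_Zero if_False) simp
  have coeff: "fps_const (2 * real n - 1) + fps_const (real n - 1) * fps_X
      = (2 + fps_X) * of_nat n - (1 + fps_X :: real fps)"
    by (simp add: fps_of_nat[symmetric] numeral_fps_const algebra_simps)
  show ?thesis
    by (simp only: expand coeff) (simp add: algebra_simps)
qed

lemma Gser_pde: "fps_deriv Gser = fps_derivation (2 + fps_X) ((1 + fps_X)^2) Gser"
proof -
  have "Gser = egf_coeffs Gn"
    by (simp add: Gser_def egf_coeffs_def)
  then show ?thesis
    using egf_coeffs_pde[of Gn "2 + fps_X" "(1 + fps_X)^2" 0] Gn_Suc by simp
qed

lemma Hser_pde:
  "fps_deriv Hser = fps_derivation (2 + fps_X) ((1 + fps_X)^2) Hser
     - fps_const (1 + fps_X) * Hser"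
proof -
  have Hser_eq: "Hser = egf_coeffs Hn"
    by (simp add: Hser_def egf_coeffs_def)
  show ?thesis
    unfolding Hser_eq by (rule egf_coeffs_pde) (rule Hn_Suc)
qed

lemma Hn_0_eq: "Hn 0 = (1 + fps_X) * (Gn 0 - fps_const (1/2) * Gn 0 ^ 2)"
proof -
  have "(1 + fps_X) * (Gn 0 - fps_const (1/2) * Gn 0 ^ 2) * (2 * (fps_X + 1))
      = 2 * (1 + fps_X) * (Gn 0 * (1 + fps_X)) - (2 * fps_const (1/2)) * (Gn 0 * (1 + fps_X))^2"
    by (simp add: power2_eq_square algebra_simps)
  also have "\<dots> = Hn 0 * (2 * (fps_X + 1))"
    unfolding Gn_0_mult Hn_0_mult by (simp add: numeral_fps_const power2_eq_square algebra_simps)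
  finally show ?thesis
    by (subst (asm) mult_right_cancel) (auto simp: fps_eq_iff)
qed

theorem mainTheorem7:
  shows "Hser = fps_const (1 + fps_X) *
           (Gser - fps_const (fps_const (1/2)) * Gser ^ 2)"
proof -
  define M where "M = Gser - fps_const (fps_const (1/2)) * Gser ^ 2"
  define K where "K = fps_const (1 + fps_X) * M"
  have M_pde: "fps_deriv M = fps_derivation (2 + fps_X) ((1 + fps_X)^2) M"
    unfolding M_def by (rule fps_derivation_solution_quadratic) (rule Gser_pde)
  have "fps_deriv K = fps_derivation (2 + fps_X) ((1 + fps_X)^2) K
      - fps_const ((1 + fps_X)^2) * M"
    using fps_derivation_solution_const_mult[OF M_pde, of "1 + fps_X"] by (simp add: K_def)
  also have "fps_const ((1 + fps_X)^2) * M = fps_const (1 + fps_X) * K"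
    by (simp add: K_def power2_eq_square mult.assoc flip: fps_const_mult)
  finally have K_pde: "fps_deriv K = fps_derivation (2 + fps_X) ((1 + fps_X)^2) K
      - fps_const (1 + fps_X) * K" .
  have "Hser - K = 0"
  proof (rule linear_pde_solution_eq_0)
    show "fps_deriv (Hser - K) = fps_derivation (2 + fps_X) ((1 + fps_X)^2) (Hser - K)
        - fps_const (1 + fps_X) * (Hser - K)"
      by (simp add: Hser_pde K_pde fps_derivation_diff algebra_simps)
    show "(Hser - K) $ 0 = 0"
      using Hn_0_eq by (simp add: K_def M_def Hser_def Gser_def power2_eq_square)
  qed
  then show ?thesis
    by (simp add: K_def M_def)
qed

end
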